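(* Let $\{x_k\}$, $\{\tilde x_k\}$ and $\{\xi_k\}$ be the sequences produced by Algorithm DFNDFL (described in the context) applied to $\min\{f(x): x\in X\cap\mathcal{Z}\}$, let $H=\{k:\xi_{k+1}<\xi_k\}$, and let $x^*\in X\cap\mathcal{Z}$ be any accumulation point of $\{x_k\}_{k\in H}$. Then $f(x^* )\le f(\bar x)$ for all $\bar x\in\mathcal{B}^z(x^* )$, where $\mathcal{B}^z(x^* )=\{x^*+d: d\in D^z(x^* )\}$.
   Context: Setting. $\{1,\dots,n\}=I^c\cup I^z$, $I^c\cap I^z=\emptyset$; for $v\in\mathbb{R}^n$, $v_c=(v_i)_{i\in I^c}$, $v_z=(v_i)_{i\in I^z}$. $l,u\in\mathbb{R}^n$ finite, $l_i<u_i$, $l_i,u_i\in\mathbb{Z}$ for $i\in I^z$; $X=\{x:l\le x\le u\}$; $\mathcal{Z}=\{x:x_i\in\mathbb{Z}\ \forall i\in I^z\}$; $[x]_{[l,u]}=\max\{l,\min\{u,x\}\}$ componentwise; $\|\cdot\|$ Euclidean. $f:\mathbb{R}^n\to\mathbb{R}$ is Lipschitz w.r.t. continuous variables: $\exists L>0$, $|f(x)-f(y)|\le L\|x-y\|$ whenever $x_z=y_z$. A vector in $\mathbb{Z}^p$ is primitive if the gcd of its components is 1. For $x\in X\cap\mathcal{Z}$: $D^z(x)=\{d\in\mathbb{Z}^n: d_i=0\ (i\in I^c),\ d_z \text{ primitive},\ x+d\in X\cap\mathcal{Z}\}$; $D^c(x)=\{s\in\mathbb{R}^n: s_i=0\ (i\in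 I^z),\ s_i\ge0 \text{ if } i\in I^c, x_i=l_i,\ s_i\le 0 \text{ if } i\in I^c, x_i=u_i\}$. Procedures (data $\gamma>0$, $\delta\in(0,1)$). PCS$(\tilde\alpha,w,p)$: set $\alpha=\tilde\alpha$; if $f([w+\alpha p]_{[l,u]})\le f(w)-\gamma\alpha^2$ set $\tilde p=p$, else if $f([w-\alpha p]_{[l,u]})\le f(w)-\gamma\alpha^2$ set $\tilde p=-p$, else return $(0,p)$; then repeat: $\beta=\alpha/\delta$; if $f([w+\beta\tilde p]_{[l,u]})>f(w)-\gamma\beta^2$ return $(\alpha,\tilde p)$, else $\alpha=\beta$. DS$(\tilde\alpha,w,p,\xi)$: let $\bar\alpha$ be the largest $\alpha\ge0$ with $w+\alpha p\in X\cap\mathcal{Z}$, set $\alpha=\min\{\bar\alpha,\tilde\alpha\}$; if not ($\alpha>0$ and $f(w+\alpha p)\le f(w)-\xi$) return $0$; otherwise, while $\alpha<\bar\alpha$ and $f(w+\min\{\bar\alpha,2\alpha\}p)\le f(w)-\xi$, set $\alpha=\min\{\bar\alpha,2\alpha\}$; then return $\alpha$. Algorithm DFNDFL. Data: $x_0\in X\cap\mathcal{Z}$, $\xi_0>0$, $\theta\in(0,1)$; a sequence $\{s_k\}$ with $s_k\in D^c(x_0)$, $\|s_k\|=1$; $\tilde\alpha^c_0=1$; a set $D_0\subset D^z(x_0)$ with $\tilde\alpha^{(d)}_0=1$ for $d\in D_0$; $D:=D_0$ (tentative steps $\tilde\alpha^{(d)}$ not updated in an iteration keep their value). For $k=0,1,\dots$: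 Phase 1: $(\alpha^c_k,\tilde s_k)=$PCS$(\tilde\alpha^c_k,x_k,s_k)$; if $\alpha^c_k=0$ set $\tilde\alpha^c_{k+1}=\theta\tilde\alpha^c_k$, $\tilde x_k=x_k$; else $\tilde\alpha^c_{k+1}=\alpha^c_k$, $\tilde x_k=[x_k+\alpha^c_k\tilde s_k]_{[l,u]}$. Phase 2.A: set $y^+=\tilde x_k$; while $D\ne\emptyset$ and $y^+=\tilde x_k$: choose $d\in D$, set $D=D\setminus\{d\}$, $y=y^+$, $\alpha=$DS$(\tilde\alpha^{(d)}_k,y,d,\xi_k)$; if $\alpha=0$ set $y^+=y$, $\tilde\alpha^{(d)}_{k+1}=\max\{1,\lfloor\tilde\alpha^{(d)}_k/2\rfloor\}$; else $y^+=y+\alpha d$, $\tilde\alpha^{(d)}_{k+1}=\alpha$. Phase 2.B: if $y^+=\tilde x_k$ and the Discrete Search failed (returned $0$) with $\tilde\alpha^{(d)}_k=1$ for all $d\in D_k$, then set $\xi_{k+1}=\theta\xi_k$ and: if $D_k\supseteq D^z(\tilde x_k)$ set $D_{k+1}=D_k$; otherwise generate $D_{k+1}$ with $D_{k+1}\subseteq D^z(\tilde x_k)$, $D_{k+1}\supset D_k$ (strictly), and set $\tilde\alpha^{(d)}_{k+1}=1$ for $d\in D_{k+1}\setminus D_k$. Otherwise set $D_{k+1}=D_k$ and $\xi_{k+1}=\xi_k$. In all cases set $D=D_{k+1}$. Phase 3: choose any $x_{k+1}\in X\cap\mathcal{Z}$ with $f(x_{k+1})\le f(y^+)$. *)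

theory Defs
  imports "HOL-Analysis.Analysis"
begin

text \<open>Vectors live in real^'n; the index set of integer variables is Iz,
  the continuous ones are its complement.\<close>

definition proj :: "real^'n \<Rightarrow> real^'n \<Rightarrow> real^'n \<Rightarrow> real^'n" where
  "proj l u x = (\<chi> i. max (l$i) (min (u$i) (x$i)))"

definition boxX :: "real^'n \<Rightarrow> real^'n \<Rightarrow> (real^'n) set" where
  "boxX l u = {x. \<forall>i. l$i \<le> x$i \<and> x$i \<le> u$i}"

definition intZ :: "'n set \<Rightarrow> (real^'n) set" where
  "intZ Iz = {x. \<forall>i\<in>Iz. x$i \<in> \<int>}"

definition primitive_on :: "'n set \<Rightarrow> real^'n \<Rightarrow> bool" where
  "primitive_on Iz d \<longleftrightarrow> (\<forall>i\<in>Iz. d$i \<in> \<int>) \<and> Gcd ((\<lambda>i. \<lfloor>d$i\<rfloor>) ` Iz) = (1::int)"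

definition Dz :: "'n set \<Rightarrow> real^'n \<Rightarrow> real^'n \<Rightarrow> real^'n \<Rightarrow> (real^'n) set" where
  "Dz Iz l u x = {d. (\<forall>i. i \<notin> Iz \<longrightarrow> d$i = 0) \<and> primitive_on Iz d
                     \<and> x + d \<in> boxX l u \<inter> intZ Iz}"

definition Dc :: "'n set \<Rightarrow> real^'n \<Rightarrow> real^'n \<Rightarrow> real^'n \<Rightarrow> (real^'n) set" where
  "Dc Iz l u x = {s. (\<forall>i\<in>Iz. s$i = 0)
                     \<and> (\<forall>i. i \<notin> Iz \<longrightarrow> x$i = l$i \<longrightarrow> s$i \<ge> 0)
                     \<and> (\<forall>i. i \<notin> Iz \<longrightarrow> x$i = u$i \<longrightarrow> s$i \<le> 0)}"

text \<open>Projected Continuous Search PCS(alpha~, w, p).  The expansion loop returns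
  alpha~/delta^j for the least j such that the sufficient decrease test fails ta
  alpha~/delta^(j+1).\<close>
definition PCS :: "(real^'n \<Rightarrow> real) \<Rightarrow> real^'n \<Rightarrow> real^'n \<Rightarrow> real \<Rightarrow> real
                  \<Rightarrow> real \<Rightarrow> real^'n \<Rightarrow> real^'n \<Rightarrow> real \<times> (real^'n)" where
  "PCS f l u \<gamma> \<delta> ta w p =
    (let suff = (\<lambda>\<beta> q. f (proj l u (w + \<beta> *\<^sub>R q)) \<le> f w - \<gamma> * \<beta>\<^sup>2);
         grow = (\<lambda>q. (ta / \<delta> ^ (LEAST j. \<not> suff (ta / \<delta> ^ Suc j) q), q))
     in if suff ta p then grow p
        else if suff ta (-p) then grow (-p)
        else (0, p))"

text \<open>Discrete Search DS(alpha~, w, p, xi).  The doubling loop visits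
  a_j = min(alpha_bar, 2^j a_0) and stops at the first j where the loop guard fails.\<close>
definition DS :: "(real^'n \<Rightarrow> real) \<Rightarrow> 'n set \<Rightarrow> real^'n \<Rightarrow> real^'n \<Rightarrow> real
                  \<Rightarrow> real^'n \<Rightarrow> real^'n \<Rightarrow> real \<Rightarrow> real" where
  "DS f Iz l u ta w p \<xi> =
    (let abar = Sup {a. 0 \<le> a \<and> w + a *\<^sub>R p \<in> boxX l u \<inter> intZ Iz};
         a0 = min abar ta;
         a = (\<lambda>j::nat. min abar (2 ^ j * a0))
     in if \<not> (a0 > 0 \<and> f (w + a0 *\<^sub>R p) \<le> f w - \<xi>) then 0
        else a (LEAST j. \<not> (a j < abar \<and> f (w + a (Suc j) *\<^sub>R p) \<le> f w - \<xi>)))"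

text \<open>A run of Algorithm DFNDFL.  x = x_k, xt = x~_k, xi = xi_k, ac = alpha~^c_k,
  Dk = D_k, ta k d = alpha~^(d)_k, yp = y^+ at the end of Phase 2.A of iteration k.
  In Phase 2.A the directions are tried in the order given by a list ds of distinct
  elements of D_k; the loop stops at the first successful one or when D_k is exhausted.\<close>
definition dfndfl_run ::
  "(real^'n \<Rightarrow> real) \<Rightarrow> 'n set \<Rightarrow> real^'n \<Rightarrow> real^'n \<Rightarrow> real \<Rightarrow> real \<Rightarrow> real
   \<Rightarrow> (nat \<Rightarrow> real^'n) \<Rightarrow> (nat \<Rightarrow> real^'n) \<Rightarrow> (nat \<Rightarrow> real^'n) \<Rightarrow> (nat \<Rightarrow> real)
   \<Rightarrow> (nat \<Rightarrow> real) \<Rightarrow> (nat \<Rightarrow> (real^'n) set) \<Rightarrow> (nat \<Rightarrow> real^'n \<Rightarrow> real)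
   \<Rightarrow> (nat \<Rightarrow> real^'n) \<Rightarrow> bool" where
  "dfndfl_run f Iz l u \<gamma> \<delta> \<theta> s x xt xi ac Dk ta yp \<longleftrightarrow>
     \<gamma> > 0 \<and> 0 < \<delta> \<and> \<delta> < 1 \<and> 0 < \<theta> \<and> \<theta> < 1 \<and> xi 0 > 0
   \<and> x 0 \<in> boxX l u \<inter> intZ Iz
   \<and> (\<forall>k. s k \<in> Dc Iz l u (x 0) \<and> norm (s k) = 1)
   \<and> ac 0 = 1 \<and> Dk 0 \<subseteq> Dz Iz l u (x 0) \<and> (\<forall>d\<in>Dk 0. ta 0 d = 1)
   \<and> (\<forall>k.
       \<comment> \<open>Phase 1\<close>
       (let (a, st) = PCS f l u \<gamma> \<delta> (ac k) (x k) (s k) in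
          (a = 0 \<longrightarrow> ac (Suc k) = \<theta> * ac k \<and> xt k = x k)
        \<and> (a \<noteq> 0 \<longrightarrow> ac (Suc k) = a \<and> xt k = proj l u (x k + a *\<^sub>R st)))
       \<comment> \<open>Phase 2.A\<close>
     \<and> (\<exists>ds. distinct ds \<and> set ds \<subseteq> Dk k \<and>
          (let r = (\<lambda>d. DS f Iz l u (ta k d) (xt k) d (xi k)) in
             (\<forall>j. j + 1 < length ds \<longrightarrow> r (ds ! j) = 0)
           \<and> ((ds \<noteq> [] \<and> r (last ds) \<noteq> 0 \<and> yp k = xt k + r (last ds) *\<^sub>R last ds)
              \<or> (set ds = Dk k \<and> (\<forall>d\<in>set ds. r d = 0) \<and> yp k = xt k))
           \<and> (\<forall>d. ta (Suc k) d =
                 (if d \<in> set ds then (if r d = 0 then max 1 (of_int \<lfloor>ta k d / 2\<rfloor>) else r d)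
                  else if d \<in> Dk (Suc k) - Dk k then 1 else ta k d))))
       \<comment> \<open>Phase 2.B\<close>
     \<and> (let cond = (yp k = xt k \<and> (\<forall>d\<in>Dk k. ta k d = 1)) in
          (cond \<longrightarrow> xi (Suc k) = \<theta> * xi k
                   \<and> (Dz Iz l u (xt k) \<subseteq> Dk k \<longrightarrow> Dk (Suc k) = Dk k)
                   \<and> (\<not> Dz Iz l u (xt k) \<subseteq> Dk k \<longrightarrow>
                         Dk k \<subset> Dk (Suc k) \<and> Dk (Suc k) \<subseteq> Dz Iz l u (xt k)))
        \<and> (\<not> cond \<longrightarrow> xi (Suc k) = xi k \<and> Dk (Suc k) = Dk k))
       \<comment> \<open>Phase 3\<close>
     \<and> x (Suc k) \<in> boxX l u \<inter> intZ Iz \<and> f (x (Suc k)) \<le> f (yp k))"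

end

theory Submission
  imports Defs
begin

text \<open>
  On the iterations in H the tolerance xi is multiplied by \<theta>, so it tends to 0 along the
  subsequence. The values f(x_k) do not increase and the Phase 1 step \<alpha> of iteration k
  gains at least \<gamma>\<alpha>^2, so these steps vanish and the points x~_k converge to x* along the
  subsequence as well; their integer coordinates are then eventually those of x*, where f
  is continuous by the Lipschitz assumption. The direction sets D_k grow inside the finite
  set of primitive directions that fit into the box, so they stabilise, and from then on an
  iteration in H has D^z(x~_k) \<subseteq> D_k with every discrete search failing at unit step:
  f(x~_k + d) > f(x~_k) - xi_k. Every d \<in> D^z(x*) lies in D^z(x~_k) eventually, and passing
  to the limit gives f(x*) \<le> f(x* + d).
\<close>

section \<open>Expansion loops of the line searches\<close>

lemma holds_where_expansion_stops:
  assumes "Q 0" and "\<not> (R n \<and> Q (Suc n))"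
  shows "Q (LEAST j. \<not> (R j \<and> Q (Suc j)))"
proof (cases "LEAST j. \<not> (R j \<and> Q (Suc j))")
  case 0
  then show ?thesis using assms(1) by simp
next
  case (Suc m)
  then have "R m \<and> Q (Suc m)"
    using not_less_Least[of m "\<lambda>j. \<not> (R j \<and> Q (Suc j))"] by simp
  then show ?thesis using Suc by simp
qed

lemma expansion_eventually_fails:
  fixes g :: "real \<Rightarrow> real"
  assumes "0 < ta" "0 < \<delta>" "\<delta> < 1" "0 < \<gamma>" and "\<And>\<beta>. B \<le> g \<beta>"
  obtains n where "\<not> g (ta / \<delta> ^ Suc n) \<le> c - \<gamma> * (ta / \<delta> ^ Suc n)\<^sup>2"
proof -
  define K where "K = max 1 ((c - B) / \<gamma>)"
  obtain n where n: "K / ta < (1 / \<delta>) ^ n"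
    using real_arch_pow[of "1 / \<delta>" "K / ta"] assms(2,3) by auto
  define \<beta> where "\<beta> = ta / \<delta> ^ Suc n"
  have "ta / \<delta> ^ n \<le> \<beta>"
    unfolding \<beta>_def using assms(1-3) by (simp add: field_simps mult_left_le_one_le)
  moreover have "K < ta / \<delta> ^ n"
    using n assms(1,2) by (simp add: field_simps power_one_over)
  ultimately have "K < \<beta>"
    by linarith
  then have "1 \<le> \<beta>" "(c - B) / \<gamma> < \<beta>"
    by (auto simp: K_def)
  then have "c - B < \<gamma> * \<beta>"
    using assms(4) by (simp add: pos_divide_less_eq mult.commute)
  moreover have "\<gamma> * \<beta> \<le> \<gamma> * \<beta>\<^sup>2"
    using \<open>1 \<le> \<beta>\<close> assms(4) by (simp add: power2_eq_square)
  ultimately have "\<not> g \<beta> \<le> c - \<gamma> * \<beta>\<^sup>2"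
    using assms(5)[of \<beta>] by linarith
  then show thesis
    using that \<beta>_def by blast
qed

lemma DS_sufficient_decrease:
  assumes "DS f Iz l u ta w p \<xi> \<noteq> 0"
  shows "f (w + DS f Iz l u ta w p \<xi> *\<^sub>R p) \<le> f w - \<xi>"
proof -
  define abar where "abar = Sup {a. 0 \<le> a \<and> w + a *\<^sub>R p \<in> boxX l u \<inter> intZ Iz}"
  define a0 where "a0 = min abar ta"
  define a where "a j = min abar (2 ^ j * a0)" for j :: nat
  define Q where "Q j \<longleftrightarrow> f (w + a j *\<^sub>R p) \<le> f w - \<xi>" for j
  have "a 0 = a0"
    unfolding a_def a0_def by simp
  then have DS_eq: "DS f Iz l u ta w p \<xi> =
      (if \<not> (a0 > 0 \<and> Q 0) then 0 else a (LEAST j. \<not> (a j < abar \<and> Q (Suc j))))"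
    unfolding DS_def Let_def abar_def a0_def a_def Q_def by simp
  with assms have a0: "a0 > 0" "Q 0"
    by (auto split: if_splits)
  obtain n where "abar / a0 < 2 ^ n"
    using real_arch_pow[of 2 "abar / a0"] by auto
  then have "\<not> a n < abar"
    using a0(1) by (simp add: a_def field_simps)
  then have "Q (LEAST j. \<not> (a j < abar \<and> Q (Suc j)))"
    using holds_where_expansion_stops[of Q "\<lambda>j. a j < abar" n] a0(2) by blast
  then show ?thesis
    using DS_eq a0 by (simp add: Q_def)
qed

text \<open>Boundedness is needed because the maximal feasible step of DS is a Sup, which is
  unspecified for unbounded sets.\<close>

lemma DS_unit_step_fails:
  assumes "DS f Iz l u 1 w d \<xi> = 0"
    and "w + d \<in> boxX l u \<inter> intZ Iz"
    and "bdd_above {a. 0 \<le> a \<and> w + a *\<^sub>R d \<in> boxX l u \<inter> intZ Iz}"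
  shows "f w - \<xi> < f (w + d)"
proof -
  define abar where "abar = Sup {a. 0 \<le> a \<and> w + a *\<^sub>R d \<in> boxX l u \<inter> intZ Iz}"
  have "1 \<le> abar"
    unfolding abar_def by (rule cSup_upper) (use assms(2,3) in auto)
  then have "min abar 1 = 1" "min abar (2 ^ j * min abar 1) \<noteq> 0" for j :: nat
    by (simp_all add: min_def)
  then show ?thesis
    using assms(1) unfolding DS_def Let_def abar_def[symmetric] by (simp split: if_splits)
qed

lemma PCS_sufficient_decrease:
  assumes "PCS f l u \<gamma> \<delta> ta w p = (a, q)" "0 < ta" "0 < \<delta>" "\<delta> < 1" "0 < \<gamma>"
    and "\<And>\<beta> q. q \<in> {p, -p} \<Longrightarrow> B \<le> f (proj l u (w + \<beta> *\<^sub>R q))"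
  shows "a = 0 \<or> (0 < a \<and> q \<in> {p, -p} \<and> f (proj l u (w + a *\<^sub>R q)) \<le> f w - \<gamma> * a\<^sup>2)"
proof -
  define suff where "suff \<beta> q \<longleftrightarrow> f (proj l u (w + \<beta> *\<^sub>R q)) \<le> f w - \<gamma> * \<beta>\<^sup>2" for \<beta> q
  define grow where "grow q = (ta / \<delta> ^ (LEAST j. \<not> suff (ta / \<delta> ^ Suc j) q), q)" for q
  have PCS_eq: "PCS f l u \<gamma> \<delta> ta w p =
      (if suff ta p then grow p else if suff ta (-p) then grow (-p) else (0, p))"
    unfolding PCS_def Let_def suff_def grow_def by simp
  have grow: "0 < fst (grow q) \<and> suff (fst (grow q)) q" if "q \<in> {p, -p}" "suff ta q" for q
  proof
    show "0 < fst (grow q)"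
      using assms(2,3) by (simp add: grow_def)
    have "B \<le> f (proj l u (w + \<beta> *\<^sub>R q))" for \<beta>
      using assms(6) that(1) .
    then obtain n where "\<not> suff (ta / \<delta> ^ Suc n) q"
      unfolding suff_def
      by (rule expansion_eventually_fails[OF assms(2-5), where g = "\<lambda>\<beta>. f (proj l u (w + \<beta> *\<^sub>R q))"])
    then show "suff (fst (grow q)) q"
      using holds_where_expansion_stops[of "\<lambda>j. suff (ta / \<delta> ^ j) q" "\<lambda>_. True" n] that(2)
      by (simp add: grow_def)
  qed
  consider "suff ta p" "(a, q) = grow p" | "suff ta (-p)" "(a, q) = grow (-p)" | "a = 0"
    using assms(1) PCS_eq by (auto split: if_splits)
  then show ?thesis
  proof cases
    case 1
    then show ?thesis using grow[of p] by (auto simp: suff_def grow_def)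
  next
    case 2
    then show ?thesis using grow[of "-p"] by (auto simp: suff_def grow_def)
  qed simp
qed

section \<open>The box and its integer directions\<close>

lemma proj_in_boxX: "(\<And>i. l$i \<le> u$i) \<Longrightarrow> proj l u y \<in> boxX l u"
  unfolding proj_def boxX_def by auto

lemma proj_step_nth:
  "w \<in> boxX l u \<Longrightarrow> q$i = 0 \<Longrightarrow> proj l u (w + b *\<^sub>R q) $ i = w $ i"
  unfolding proj_def boxX_def by auto

lemma norm_proj_diff_le:
  assumes "w \<in> boxX l u"
  shows "norm (proj l u y - w) \<le> norm (y - w)"
proof (rule norm_le_componentwise_cart)
  fix i
  have "l$i \<le> w$i" "w$i \<le> u$i"
    using assms by (auto simp: boxX_def)
  then show "norm ((proj l u y - w) $ i) \<le> norm ((y - w) $ i)"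
    by (auto simp: proj_def)
qed

lemma norm_diff_boxX_le:
  assumes "v \<in> boxX l u" "w \<in> boxX l u"
  shows "norm (v - w) \<le> (\<Sum>i\<in>UNIV. u$i - l$i)"
proof -
  have "norm (v - w) \<le> (\<Sum>i\<in>UNIV. \<bar>(v - w)$i\<bar>)"
    by (rule norm_le_l1_cart)
  also have "\<dots> \<le> (\<Sum>i\<in>UNIV. u$i - l$i)"
  proof (rule sum_mono)
    fix i
    have "l$i \<le> v$i" "v$i \<le> u$i" "l$i \<le> w$i" "w$i \<le> u$i"
      using assms by (auto simp: boxX_def)
    then show "\<bar>(v - w)$i\<bar> \<le> u$i - l$i"
      by (simp add: abs_le_iff)
  qed
  finally show ?thesis .
qed

lemma bdd_above_feasible_steps:
  assumes "w \<in> boxX l u" and "d \<noteq> 0"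
  shows "bdd_above {a. 0 \<le> a \<and> w + a *\<^sub>R d \<in> boxX l u \<inter> intZ Iz}"
proof -
  obtain i where i: "d$i \<noteq> 0"
    using assms(2) by (metis vec_eq_iff zero_index)
  show ?thesis
    unfolding bdd_above_def
  proof (intro exI ballI)
    fix a assume "a \<in> {a. 0 \<le> a \<and> w + a *\<^sub>R d \<in> boxX l u \<inter> intZ Iz}"
    then have "0 \<le> a" "l$i \<le> w$i + a * d$i" "w$i + a * d$i \<le> u$i" "l$i \<le> w$i" "w$i \<le> u$i"
      using assms(1) by (auto simp: boxX_def)
    then have "a * \<bar>d$i\<bar> \<le> u$i - l$i"
      by (cases "d$i \<ge> 0") (auto simp: abs_if)
    then show "a \<le> (u$i - l$i) / \<bar>d$i\<bar>"
      using i by (simp add: field_simps)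
  qed
qed

lemma Dz_nonzero: "d \<in> Dz Iz l u w \<Longrightarrow> d \<noteq> 0"
  unfolding Dz_def primitive_on_def by (auto simp: image_constant_conv split: if_splits)

lemma Dz_if_int_coords_eq:
  assumes "d \<in> Dz Iz l u w" and "v \<in> boxX l u" and "\<forall>i\<in>Iz. v$i = w$i"
  shows "d \<in> Dz Iz l u v"
proof -
  have d: "\<forall>i. i \<notin> Iz \<longrightarrow> d$i = 0" "primitive_on Iz d" "w + d \<in> boxX l u \<inter> intZ Iz"
    using assms(1) by (auto simp: Dz_def)
  have "(v + d)$i = (if i \<in> Iz then (w + d)$i else v$i)" for i
    using assms(3) d(1) by auto
  then have "v + d \<in> boxX l u \<inter> intZ Iz"
    using assms(2) d(3) by (auto simp: boxX_def intZ_def)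
  with d(1,2) show ?thesis
    by (simp add: Dz_def)
qed

lemma finite_vectors_in_finite_components:
  assumes "\<And>i. finite (S i)"
  shows "finite {v :: 'a^'n. \<forall>i. v$i \<in> S i}"
proof (rule finite_subset)
  show "{v :: 'a^'n. \<forall>i. v$i \<in> S i} \<subseteq> vec_lambda ` (\<Pi>\<^sub>E i\<in>UNIV. S i)"
    by (auto intro!: image_eqI[where x = "vec_nth _"])
  show "finite (vec_lambda ` (\<Pi>\<^sub>E i\<in>UNIV. S i))"
    using assms by (intro finite_imageI finite_PiE) auto
qed

lemma finite_UN_Dz:
  fixes l u :: "real^'n"
  shows "finite (\<Union>w\<in>boxX l u. Dz Iz l u w)"
proof (rule finite_subset)
  show "(\<Union>w\<in>boxX l u. Dz Iz l u w) \<subseteq> {d. \<forall>i. d$i \<in> {x \<in> \<int>. l$i - u$i \<le> x \<and> x \<le> u$i - l$i}}"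
  proof safe
    fix w d i assume w: "w \<in> boxX l u" and d: "d \<in> Dz Iz l u w"
    show "d$i \<in> \<int>"
      using d by (cases "i \<in> Iz") (auto simp: Dz_def primitive_on_def)
    have "l$i \<le> w$i" "w$i \<le> u$i" "l$i \<le> w$i + d$i" "w$i + d$i \<le> u$i"
      using w d by (auto simp: Dz_def boxX_def)
    then show "l$i - u$i \<le> d$i" "d$i \<le> u$i - l$i"
      by linarith+
  qed
  show "finite {d :: real^'n. \<forall>i. d$i \<in> {x \<in> \<int>. l$i - u$i \<le> x \<and> x \<le> u$i - l$i}}"
    by (intro finite_vectors_in_finite_components finite_int_segment)
qed

lemma incseq_finite_eventually_const:
  assumes "incseq A" and "\<And>k. A k \<subseteq> F" and "finite F"
  obtains K where "\<And>k. K \<le> k \<Longrightarrow> A k = A K"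
proof -
  have fin: "finite (\<Union>k. A k)"
    using assms(2,3) by (meson UN_least finite_subset)
  have "A i \<subseteq> A j \<or> A j \<subseteq> A i" for i j
    using assms(1) by (metis incseq_def nle_le)
  then have chain: "subset.chain UNIV (range A)"
    by (auto simp: subset.chain_def)
  obtain B where "B \<in> range A" "(\<Union>k. A k) \<subseteq> B"
    by (rule finite_subset_Union_chain[OF fin _ _ chain]) auto
  then obtain K where K: "(\<Union>k. A k) \<subseteq> A K"
    by blast
  show thesis
  proof (rule that)
    fix k assume "K \<le> k"
    with assms(1) have "A K \<subseteq> A k"
      by (rule incseqD)
    with K show "A k = A K"
      by blast
  qed
qed

lemma eventually_int_coords_eq:
  fixes g :: "nat \<Rightarrow> real^'n"
  assumes "g \<longlonglongrightarrow> y" and "\<And>j. g j \<in> intZ Iz" and "y \<in> intZ Iz"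
  shows "\<forall>\<^sub>F j in sequentially. \<forall>i\<in>Iz. g j $ i = y $ i"
proof (rule eventually_ball_finite)
  show "\<forall>i\<in>Iz. \<forall>\<^sub>F j in sequentially. g j $ i = y $ i"
  proof
    fix i assume "i \<in> Iz"
    have "(\<lambda>j. g j $ i) \<longlonglongrightarrow> y $ i"
      using assms(1) by (rule tendsto_vec_nth)
    then have "\<forall>\<^sub>F j in sequentially. dist (g j $ i) (y $ i) < 1"
      by (rule tendstoD) simp
    then show "\<forall>\<^sub>F j in sequentially. g j $ i = y $ i"
    proof (rule eventually_mono)
      fix j assume "dist (g j $ i) (y $ i) < 1"
      moreover have "g j $ i - y $ i \<in> \<int>"
        using assms(2,3) \<open>i \<in> Iz\<close> by (auto simp: intZ_def)
      ultimately show "g j $ i = y $ i"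
        using Ints_nonzero_abs_less1[of "g j $ i - y $ i"] by (auto simp: dist_real_def)
    qed
  qed
qed simp

section \<open>Runs of DFNDFL\<close>

locale dfndfl_run_setting =
  fixes f :: "real^'n \<Rightarrow> real" and Iz :: "'n set" and l u :: "real^'n"
    and \<gamma> \<delta> \<theta> :: real
    and s x xt yp :: "nat \<Rightarrow> real^'n" and xi ac :: "nat \<Rightarrow> real"
    and Dk :: "nat \<Rightarrow> (real^'n) set" and ta :: "nat \<Rightarrow> real^'n \<Rightarrow> real"
    and L :: real
  assumes lu: "\<And>i. l$i < u$i"
    and L_pos: "0 < L"
    and lipschitz: "\<And>y z. (\<forall>i\<in>Iz. y$i = z$i) \<Longrightarrow> \<bar>f y - f z\<bar> \<le> L * norm (y - z)"
    and run: "dfndfl_run f Iz l u \<gamma> \<delta> \<theta> s x xt xi ac Dk ta yp"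
begin

definition alpha_c :: "nat \<Rightarrow> real" where
  "alpha_c k = fst (PCS f l u \<gamma> \<delta> (ac k) (x k) (s k))"

definition dir_c :: "nat \<Rightarrow> real^'n" where
  "dir_c k = snd (PCS f l u \<gamma> \<delta> (ac k) (x k) (s k))"

abbreviation alpha_z :: "nat \<Rightarrow> real^'n \<Rightarrow> real" where
  "alpha_z k d \<equiv> DS f Iz l u (ta k d) (xt k) d (xi k)"

abbreviation unsuccessful :: "nat \<Rightarrow> bool" where
  "unsuccessful k \<equiv> yp k = xt k \<and> (\<forall>d\<in>Dk k. ta k d = 1)"

lemma parameters: "0 < \<gamma>" "0 < \<delta>" "\<delta> < 1" "0 < \<theta>" "\<theta> < 1" "0 < xi 0"
  using run unfolding dfndfl_run_def by blast+

lemma initialization: "x 0 \<in> boxX l u \<inter> intZ Iz" "ac 0 = 1" "Dk 0 \<subseteq> Dz Iz l u (x 0)"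
  using run unfolding dfndfl_run_def by blast+

lemma continuous_directions: "s k \<in> Dc Iz l u (x 0)" "norm (s k) = 1"
  using run unfolding dfndfl_run_def by blast+

lemma phase1:
  "alpha_c k = 0 \<Longrightarrow> ac (Suc k) = \<theta> * ac k \<and> xt k = x k"
  "alpha_c k \<noteq> 0 \<Longrightarrow> ac (Suc k) = alpha_c k \<and> xt k = proj l u (x k + alpha_c k *\<^sub>R dir_c k)"
proof -
  have "let (a, st) = PCS f l u \<gamma> \<delta> (ac k) (x k) (s k) in
          (a = 0 \<longrightarrow> ac (Suc k) = \<theta> * ac k \<and> xt k = x k)
        \<and> (a \<noteq> 0 \<longrightarrow> ac (Suc k) = a \<and> xt k = proj l u (x k + a *\<^sub>R st))"
    using run unfolding dfndfl_run_def by blast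
  then show "alpha_c k = 0 \<Longrightarrow> ac (Suc k) = \<theta> * ac k \<and> xt k = x k"
    and "alpha_c k \<noteq> 0 \<Longrightarrow> ac (Suc k) = alpha_c k \<and> xt k = proj l u (x k + alpha_c k *\<^sub>R dir_c k)"
    unfolding alpha_c_def dir_c_def by (simp_all add: split_beta)
qed

lemma phase2A_cases:
  obtains d where "d \<in> Dk k" "alpha_z k d \<noteq> 0" "yp k = xt k + alpha_z k d *\<^sub>R d"
  | "\<And>d. d \<in> Dk k \<Longrightarrow> alpha_z k d = 0" "yp k = xt k"
proof -
  obtain ds where "set ds \<subseteq> Dk k"
    "(ds \<noteq> [] \<and> alpha_z k (last ds) \<noteq> 0 \<and> yp k = xt k + alpha_z k (last ds) *\<^sub>R last ds)
     \<or> (set ds = Dk k \<and> (\<forall>d\<in>set ds. alpha_z k d = 0) \<and> yp k = xt k)"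
    using run unfolding dfndfl_run_def Let_def by blast
  then show thesis
    using that by (metis last_in_set subsetD)
qed

lemma phase2B:
  "unsuccessful k \<Longrightarrow>
     xi (Suc k) = \<theta> * xi k
   \<and> (Dz Iz l u (xt k) \<subseteq> Dk k \<longrightarrow> Dk (Suc k) = Dk k)
   \<and> (\<not> Dz Iz l u (xt k) \<subseteq> Dk k \<longrightarrow> Dk k \<subset> Dk (Suc k) \<and> Dk (Suc k) \<subseteq> Dz Iz l u (xt k))"
  "\<not> unsuccessful k \<Longrightarrow> xi (Suc k) = xi k \<and> Dk (Suc k) = Dk k"
  using run unfolding dfndfl_run_def Let_def by blast+

lemma phase3: "x (Suc k) \<in> boxX l u \<inter> intZ Iz" "f (x (Suc k)) \<le> f (yp k)"
  using run unfolding dfndfl_run_def by blast+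

lemma x_feasible: "x k \<in> boxX l u \<inter> intZ Iz"
  using initialization(1) phase3(1) by (cases k) auto

lemma s_nth_zero: "i \<in> Iz \<Longrightarrow> s k $ i = 0"
  using continuous_directions(1) by (auto simp: Dc_def)

text \<open>This lower bound is what makes the expansion loop of PCS terminate.\<close>

lemma f_proj_step_lower_bound:
  assumes "\<forall>i\<in>Iz. q$i = 0"
  shows "f (x k) - L * (\<Sum>i\<in>UNIV. u$i - l$i) \<le> f (proj l u (x k + \<beta> *\<^sub>R q))"
proof -
  let ?y = "proj l u (x k + \<beta> *\<^sub>R q)"
  have "\<forall>i\<in>Iz. ?y $ i = x k $ i"
    using assms x_feasible proj_step_nth by blast
  then have "\<bar>f ?y - f (x k)\<bar> \<le> L * norm (?y - x k)"
    by (rule lipschitz)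
  also have "\<dots> \<le> L * (\<Sum>i\<in>UNIV. u$i - l$i)"
    using lu L_pos x_feasible
    by (intro mult_left_mono norm_diff_boxX_le proj_in_boxX) (auto intro: less_imp_le)
  finally show ?thesis
    by linarith
qed

lemma PCS_result_if_ac_pos:
  assumes "0 < ac k"
  shows "alpha_c k = 0 \<or> (0 < alpha_c k \<and> dir_c k \<in> {s k, - s k}
           \<and> f (proj l u (x k + alpha_c k *\<^sub>R dir_c k)) \<le> f (x k) - \<gamma> * (alpha_c k)\<^sup>2)"
proof (rule PCS_sufficient_decrease)
  show "PCS f l u \<gamma> \<delta> (ac k) (x k) (s k) = (alpha_c k, dir_c k)"
    by (simp add: alpha_c_def dir_c_def)
  show "f (x k) - L * (\<Sum>i\<in>UNIV. u$i - l$i) \<le> f (proj l u (x k + \<beta> *\<^sub>R q))"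
    if "q \<in> {s k, - s k}" for \<beta> q
    using that s_nth_zero by (intro f_proj_step_lower_bound) auto
qed (use assms parameters in auto)

lemma ac_pos: "0 < ac k"
proof (induction k)
  case 0
  then show ?case using initialization(2) by simp
next
  case (Suc k)
  then show ?case
    using PCS_result_if_ac_pos[OF Suc] phase1[of k] parameters(4) by auto
qed

lemma phase1_result:
  "xt k \<in> boxX l u \<inter> intZ Iz" "f (xt k) \<le> f (x k) - \<gamma> * (alpha_c k)\<^sup>2"
  "norm (xt k - x k) \<le> alpha_c k"
proof -
  consider "alpha_c k = 0"
    | "0 < alpha_c k" "dir_c k \<in> {s k, - s k}"
      "f (proj l u (x k + alpha_c k *\<^sub>R dir_c k)) \<le> f (x k) - \<gamma> * (alpha_c k)\<^sup>2"
    using PCS_result_if_ac_pos[OF ac_pos] by blast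
  then have "xt k \<in> boxX l u \<inter> intZ Iz \<and> f (xt k) \<le> f (x k) - \<gamma> * (alpha_c k)\<^sup>2
             \<and> norm (xt k - x k) \<le> alpha_c k"
  proof cases
    case 1
    then show ?thesis using phase1(1) x_feasible by simp
  next
    case 2
    then have xt: "xt k = proj l u (x k + alpha_c k *\<^sub>R dir_c k)"
      using phase1(2) by simp
    have "\<forall>i\<in>Iz. dir_c k $ i = 0"
      using 2(2) s_nth_zero by auto
    then have "\<forall>i\<in>Iz. xt k $ i = x k $ i"
      using x_feasible by (simp add: xt proj_step_nth)
    then have "xt k \<in> intZ Iz"
      using x_feasible by (auto simp: intZ_def)
    moreover have "xt k \<in> boxX l u"
      using lu by (simp add: xt proj_in_boxX less_imp_le)
    moreover have "norm (xt k - x k) \<le> norm ((x k + alpha_c k *\<^sub>R dir_c k) - x k)"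
      using norm_proj_diff_le x_feasible unfolding xt by blast
    moreover have "norm ((x k + alpha_c k *\<^sub>R dir_c k) - x k) = alpha_c k"
      using 2(1,2) continuous_directions(2) by auto
    ultimately show ?thesis
      using 2(3) xt by simp
  qed
  then show "xt k \<in> boxX l u \<inter> intZ Iz" "f (xt k) \<le> f (x k) - \<gamma> * (alpha_c k)\<^sup>2"
    "norm (xt k - x k) \<le> alpha_c k"
    by auto
qed

lemma xi_pos: "0 < xi k"
proof (induction k)
  case 0
  then show ?case using parameters(6) .
next
  case (Suc k)
  then show ?case
    using phase2B[of k] parameters(4) by (cases "unsuccessful k") auto
qed

lemma decseq_xi: "decseq xi"
proof (rule decseq_SucI)
  fix k
  show "xi (Suc k) \<le> xi k"
    using phase2B[of k] parameters(5) xi_pos[of k]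
    by (cases "unsuccessful k") auto
qed

lemma f_yp_le: "f (yp k) \<le> f (xt k)"
proof (cases rule: phase2A_cases[of k])
  case (1 d)
  then have "f (yp k) \<le> f (xt k) - xi k"
    using DS_sufficient_decrease by metis
  then show ?thesis
    using xi_pos[of k] by linarith
qed simp

lemma f_x_Suc_le: "f (x (Suc k)) + \<gamma> * (alpha_c k)\<^sup>2 \<le> f (x k)"
  using phase3(2)[of k] f_yp_le[of k] phase1_result(2)[of k] by linarith

lemma decseq_f_x: "decseq (\<lambda>k. f (x k))"
proof (rule decseq_SucI)
  fix k
  have "0 \<le> \<gamma> * (alpha_c k)\<^sup>2"
    using parameters(1) by simp
  then show "f (x (Suc k)) \<le> f (x k)"
    using f_x_Suc_le[of k] by linarith
qed

lemma Dk_Suc: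
  "Dk k \<subseteq> Dk (Suc k)" "Dk (Suc k) \<subseteq> Dk k \<union> Dz Iz l u (xt k)"
proof -
  have "Dk (Suc k) = Dk k \<or> Dk k \<subset> Dk (Suc k) \<and> Dk (Suc k) \<subseteq> Dz Iz l u (xt k)"
    using phase2B[of k] by blast
  then show "Dk k \<subseteq> Dk (Suc k)" "Dk (Suc k) \<subseteq> Dk k \<union> Dz Iz l u (xt k)"
    by blast+
qed

lemma Dk_subset_UN_Dz: "Dk k \<subseteq> (\<Union>w\<in>boxX l u. Dz Iz l u w)"
proof (induction k)
  case 0
  then show ?case using initialization(1,3) by blast
next
  case (Suc k)
  then show ?case using Dk_Suc(2)[of k] phase1_result(1)[of k] by blast
qed

lemma unsuccessful_if_xi_decreases:
  "xi (Suc k) < xi k \<Longrightarrow> unsuccessful k"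
  using phase2B(2) by fastforce

lemma discrete_directions_fail:
  assumes "xi (Suc k) < xi k" and "d \<in> Dk k" and "d \<in> Dz Iz l u (xt k)"
  shows "f (xt k) - xi k < f (xt k + d)"
proof (cases rule: phase2A_cases[of k])
  case (1 d')
  \<comment> \<open>impossible: a successful discrete step moves y^+ away from x~_k\<close>
  have "d' \<noteq> 0"
    using 1(1) Dk_subset_UN_Dz Dz_nonzero by blast
  then show ?thesis
    using 1(2,3) unsuccessful_if_xi_decreases[OF assms(1)] by simp
next
  case 2
  show ?thesis
  proof (rule DS_unit_step_fails)
    show "DS f Iz l u 1 (xt k) d (xi k) = 0"
      using 2(1)[OF assms(2)] unsuccessful_if_xi_decreases[OF assms(1)] assms(2) by simp
    show "xt k + d \<in> boxX l u \<inter> intZ Iz"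
      using assms(3) by (simp add: Dz_def)
    show "bdd_above {a. 0 \<le> a \<and> xt k + a *\<^sub>R d \<in> boxX l u \<inter> intZ Iz}"
      using phase1_result(1) Dz_nonzero[OF assms(3)] by (intro bdd_above_feasible_steps) auto
  qed
qed

lemma tendsto_f_if_int_coords_eventually_eq:
  assumes "g \<longlonglongrightarrow> y" and "\<forall>\<^sub>F j in sequentially. \<forall>i\<in>Iz. g j $ i = y $ i"
  shows "(\<lambda>j. f (g j)) \<longlonglongrightarrow> f y"
proof -
  have "(\<lambda>j. f (g j) - f y) \<longlonglongrightarrow> 0"
  proof (rule Lim_null_comparison)
    show "\<forall>\<^sub>F j in sequentially. norm (f (g j) - f y) \<le> L * norm (g j - y)"
      using assms(2) by eventually_elim (simp add: lipschitz)
    have "(\<lambda>j. norm (g j - y)) \<longlonglongrightarrow> 0"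
      using assms(1) by (simp add: LIM_zero tendsto_norm_zero)
    then show "(\<lambda>j. L * norm (g j - y)) \<longlonglongrightarrow> 0"
      by (rule tendsto_mult_right_zero)
  qed
  then show ?thesis
    by (rule LIM_zero_cancel)
qed

lemma Dz_subset_Dk_eventually:
  obtains K where "\<And>k. K \<le> k \<Longrightarrow> xi (Suc k) < xi k \<Longrightarrow> Dz Iz l u (xt k) \<subseteq> Dk k"
proof -
  have "incseq Dk"
    by (rule incseq_SucI) (rule Dk_Suc(1))
  then obtain K where K: "\<And>k. K \<le> k \<Longrightarrow> Dk k = Dk K"
    using incseq_finite_eventually_const[of Dk, OF _ Dk_subset_UN_Dz finite_UN_Dz] by blast
  show thesis
  proof (rule that)
    fix k assume "K \<le> k" "xi (Suc k) < xi k"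
    then have "Dk (Suc k) = Dk k"
      using K by (metis le_SucI)
    then show "Dz Iz l u (xt k) \<subseteq> Dk k"
      using phase2B(1)[OF unsuccessful_if_xi_decreases[OF \<open>xi (Suc k) < xi k\<close>]] by blast
  qed
qed

context
  fixes r :: "nat \<Rightarrow> nat" and xstar :: "real^'n"
  assumes r: "strict_mono r"
    and xi_decreases: "\<And>j. xi (Suc (r j)) < xi (r j)"
    and x_subseq: "(\<lambda>j. x (r j)) \<longlonglongrightarrow> xstar"
    and xstar: "xstar \<in> boxX l u \<inter> intZ Iz"
begin

lemma xi_subseq_tendsto_0: "(\<lambda>j. xi (r j)) \<longlonglongrightarrow> 0"
proof (rule Lim_null_comparison)
  have "xi (r j) \<le> \<theta> ^ j * xi 0" for j
  proof (induction j)
    case 0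
    then show ?case using decseq_xi by (simp add: decseq_def)
  next
    case (Suc j)
    have "Suc (r j) \<le> r (Suc j)"
      using r by (simp add: Suc_leI strict_mono_Suc_iff)
    then have "xi (r (Suc j)) \<le> xi (Suc (r j))"
      using decseq_xi by (simp add: decseq_def)
    also have "\<dots> = \<theta> * xi (r j)"
      using phase2B(1)[OF unsuccessful_if_xi_decreases[OF xi_decreases]] by simp
    also have "\<dots> \<le> \<theta> * (\<theta> ^ j * xi 0)"
      using Suc parameters(4) by (simp add: mult_left_mono)
    finally show ?case
      by simp
  qed
  then show "\<forall>\<^sub>F j in sequentially. norm (xi (r j)) \<le> \<theta> ^ j * xi 0"
    using xi_pos by (simp add: less_imp_le)
  show "(\<lambda>j. \<theta> ^ j * xi 0) \<longlonglongrightarrow> 0"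
    using parameters(4,5) by (intro tendsto_mult_left_zero LIMSEQ_power_zero) auto
qed

lemma f_x_subseq_tendsto: "(\<lambda>j. f (x (r j))) \<longlonglongrightarrow> f xstar"
  using x_subseq eventually_int_coords_eq[OF x_subseq] x_feasible xstar
  by (intro tendsto_f_if_int_coords_eventually_eq) auto

lemma f_xstar_le: "f xstar \<le> f (x k)"
proof (rule LIMSEQ_le_const2[OF f_x_subseq_tendsto], intro exI allI impI)
  fix j assume "k \<le> j"
  then have "k \<le> r j"
    using seq_suble[OF r, of j] by linarith
  then show "f (x (r j)) \<le> f (x k)"
    using decseq_f_x by (simp add: decseq_def)
qed

lemma alpha_c_subseq_tendsto_0: "(\<lambda>j. alpha_c (r j)) \<longlonglongrightarrow> 0"
proof (rule Lim_null_comparison)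
  show "\<forall>\<^sub>F j in sequentially. norm (alpha_c (r j)) \<le> sqrt ((f (x (r j)) - f xstar) / \<gamma>)"
  proof (rule always_eventually, rule allI)
    fix j
    have "\<gamma> * (alpha_c (r j))\<^sup>2 \<le> f (x (r j)) - f xstar"
      using f_x_Suc_le[of "r j"] f_xstar_le[of "Suc (r j)"] by linarith
    then have "(alpha_c (r j))\<^sup>2 \<le> (f (x (r j)) - f xstar) / \<gamma>"
      using parameters(1) by (simp add: field_simps)
    then show "norm (alpha_c (r j)) \<le> sqrt ((f (x (r j)) - f xstar) / \<gamma>)"
      by (metis real_norm_def real_sqrt_abs real_sqrt_le_mono)
  qed
  have "(\<lambda>j. (f (x (r j)) - f xstar) / \<gamma>) \<longlonglongrightarrow> 0"
    by (intro tendsto_divide_zero LIM_zero f_x_subseq_tendsto)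
  then show "(\<lambda>j. sqrt ((f (x (r j)) - f xstar) / \<gamma>)) \<longlonglongrightarrow> 0"
    using tendsto_real_sqrt by fastforce
qed

lemma xt_subseq_tendsto: "(\<lambda>j. xt (r j)) \<longlonglongrightarrow> xstar"
proof -
  have "(\<lambda>j. xt (r j) - x (r j)) \<longlonglongrightarrow> 0"
    using phase1_result(3) by (intro Lim_null_comparison[OF _ alpha_c_subseq_tendsto_0]) auto
  then have "(\<lambda>j. x (r j) + (xt (r j) - x (r j))) \<longlonglongrightarrow> xstar + 0"
    by (intro tendsto_add x_subseq)
  then show ?thesis
    by simp
qed

lemma f_le_on_discrete_neighbours:
  assumes "d \<in> Dz Iz l u xstar"
  shows "f xstar \<le> f (xstar + d)"
proof -
  obtain K where K: "\<And>k. K \<le> k \<Longrightarrow> xi (Suc k) < xi k \<Longrightarrow> Dz Iz l u (xt k) \<subseteq> Dk k"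
    using Dz_subset_Dk_eventually by blast
  have xt_int_eq: "\<forall>\<^sub>F j in sequentially. \<forall>i\<in>Iz. xt (r j) $ i = xstar $ i"
    using eventually_int_coords_eq[OF xt_subseq_tendsto] phase1_result(1) xstar by blast
  have below: "\<forall>\<^sub>F j in sequentially. f (xt (r j)) - xi (r j) \<le> f (xt (r j) + d)"
    using xt_int_eq eventually_ge_at_top[of K]
  proof eventually_elim
    case (elim j)
    have "K \<le> r j"
      using elim(2) seq_suble[OF r, of j] by linarith
    moreover have dz: "d \<in> Dz Iz l u (xt (r j))"
      using Dz_if_int_coords_eq[OF assms _ elim(1)] phase1_result(1) by blast
    ultimately have "d \<in> Dk (r j)"
      using K xi_decreases by blast
    then have "f (xt (r j)) - xi (r j) < f (xt (r j) + d)"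
      by (rule discrete_directions_fail[OF xi_decreases _ dz])
    then show ?case
      by (rule less_imp_le)
  qed
  have lim_below: "(\<lambda>j. f (xt (r j)) - xi (r j)) \<longlonglongrightarrow> f xstar - 0"
    by (intro tendsto_diff tendsto_f_if_int_coords_eventually_eq xt_subseq_tendsto xt_int_eq
        xi_subseq_tendsto_0)
  have lim_above: "(\<lambda>j. f (xt (r j) + d)) \<longlonglongrightarrow> f (xstar + d)"
  proof (rule tendsto_f_if_int_coords_eventually_eq)
    show "(\<lambda>j. xt (r j) + d) \<longlonglongrightarrow> xstar + d"
      by (intro tendsto_add xt_subseq_tendsto tendsto_const)
    show "\<forall>\<^sub>F j in sequentially. \<forall>i\<in>Iz. (xt (r j) + d) $ i = (xstar + d) $ i"
      using xt_int_eq by eventually_elim simp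
  qed
  have "f xstar - 0 \<le> f (xstar + d)"
    by (rule tendsto_le[OF trivial_limit_sequentially lim_above lim_below below])
  then show ?thesis
    by simp
qed

end

end

theorem mainTheorem4:
  fixes f :: "real^'n \<Rightarrow> real" and Iz :: "'n set" and l u :: "real^'n"
    and \<gamma> \<delta> \<theta> :: real
    and s x xt yp :: "nat \<Rightarrow> real^'n" and xi ac :: "nat \<Rightarrow> real"
    and Dk :: "nat \<Rightarrow> (real^'n) set" and ta :: "nat \<Rightarrow> real^'n \<Rightarrow> real"
    and r :: "nat \<Rightarrow> nat" and xstar :: "real^'n"
  assumes lu: "\<forall>i. l$i < u$i"
    and lu_int: "\<forall>i\<in>Iz. l$i \<in> \<int> \<and> u$i \<in> \<int>"
    and lip: "\<exists>L>0. \<forall>y z. (\<forall>i\<in>Iz. y$i = z$i) \<longrightarrow> \<bar>f y - f z\<bar> \<le> L * norm (y - z)"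
    and run: "dfndfl_run f Iz l u \<gamma> \<delta> \<theta> s x xt xi ac Dk ta yp"
    and sub: "strict_mono r" "\<forall>j. r j \<in> {k. xi (Suc k) < xi k}"
    and lim: "(x \<circ> r) \<longlonglongrightarrow> xstar"
    and xstar: "xstar \<in> boxX l u \<inter> intZ Iz"
  shows "\<forall>d\<in>Dz Iz l u xstar. f xstar \<le> f (xstar + d)"
proof -
  obtain L where "0 < L" "\<forall>y z. (\<forall>i\<in>Iz. y$i = z$i) \<longrightarrow> \<bar>f y - f z\<bar> \<le> L * norm (y - z)"
    using lip by blast
  then interpret dfndfl_run_setting f Iz l u \<gamma> \<delta> \<theta> s x xt yp xi ac Dk ta L
    using lu run by unfold_locales auto
  have "\<And>j. xi (Suc (r j)) < xi (r j)" "(\<lambda>j. x (r j)) \<longlonglongrightarrow> xstar"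
    using sub(2) lim by (simp_all add: comp_def)
  then show ?thesis
    using f_le_on_discrete_neighbours[OF sub(1) _ _ xstar] by blast
qed

end
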